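(* Let $\mathbf{H}$ be any one of the four history systems $\mathbf{G3N}^{Hist}$, $\mathbf{G3NeF}^{Hist}$, $\mathbf{G3CoPC}^{Hist}$, $\mathbf{G3MPC}^{Hist}$. Backward proof search in $\mathbf{H}$ terminates: there is no infinite sequence $S_0,S_1,S_2,\dots$ of history sequents such that, for every $i$, $S_{i+1}$ is a premise of some instance of a rule of $\mathbf{H}$ whose conclusion is $S_i$.
   Context: Formulas are generated from a countable set of propositional variables $p,q,\dots$ and the constant $\top$ by the grammar $\varphi::= p\mid\top\mid\varphi\wedge\varphi\mid\varphi\vee\varphi\mid\varphi\to\varphi\mid\neg\varphi$ (there is no constant $\bot$). A history sequent is an expression $\mathcal H\mid\Gamma\Rightarrow\varphi$ where $\mathcal H$ (the history) is a finite set of formulas, $\Gamma$ is a finite multiset of formulas and $\varphi$ is a formula (the goal). $(\psi,\mathcal H)$ denotes $\mathcal H\cup\{\psi\}$, $\emptyset$ is the empty history, $\Gamma,\alpha$ denotes $\Gamma$ with one more occurrence of $\alpha$, and "$\alpha\in\Gamma$" means $\alpha$ occurs in $\Gamma$. History rules ($p$ a propositional variable; side conditions after "if"): (ax) $\mathcal H\mid\Gamma,p\Rightarrow p$; ($\top$) $\mathcal H\mid\Gamma\Rightarrow\top$; ($\to$r$_1$) from $\emptyset\mid\Gamma,\alpha\Rightarrow\beta$ infer $\mathcal H\mid\Gamma\Rightarrow\alpha\to\beta$, if $\alpha\notin\Gamma$; ($\to$r$_2$) from $\mathcal H\mid\Gamma\Rightarrow\beta$ infer $\mathcal H\mid\Gamma\Rightarrow\alpha\to\beta$,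 if $\alpha\in\Gamma$; ($\to$l) from $(\varphi,\mathcal H)\mid\Gamma,\alpha\to\beta\Rightarrow\alpha$ and $\emptyset\mid\Gamma,\alpha\to\beta,\beta\Rightarrow\varphi$ infer $\mathcal H\mid\Gamma,\alpha\to\beta\Rightarrow\varphi$, if $\varphi\notin\mathcal H$ and $\beta\notin\Gamma$; ($\wedge$r) from $\mathcal H\mid\Gamma\Rightarrow\alpha$ and $\mathcal H\mid\Gamma\Rightarrow\beta$ infer $\mathcal H\mid\Gamma\Rightarrow\alpha\wedge\beta$; ($\wedge$l$_1$) from $\emptyset\mid\Gamma,\alpha\wedge\beta,\alpha\Rightarrow\varphi$ infer $\mathcal H\mid\Gamma,\alpha\wedge\beta\Rightarrow\varphi$, if $\alpha\notin\Gamma$; ($\wedge$l$_2$) from $\emptyset\mid\Gamma,\alpha\wedge\beta,\beta\Rightarrow\varphi$ infer $\mathcal H\mid\Gamma,\alpha\wedge\beta\Rightarrow\varphi$, if $\beta\notin\Gamma$; ($\vee$r$_1$), ($\vee$r$_2$) from $\mathcal H\mid\Gamma\Rightarrow\alpha$ (resp. $\mathcal H\mid\Gamma\Rightarrow\beta$) infer $\mathcal H\mid\Gamma\Rightarrow\alpha\vee\beta$; ($\vee$l) from $\emptyset\mid\Gamma,\alpha\vee\beta,\alpha\Rightarrow\varphi$ and $\emptyset\mid\Gamma,\alpha\vee\beta,\beta\Rightarrow\varphi$ infer $\mathcal H\mid\Gamma,\alpha\vee\beta\Rightarrow\varphi$, if $\alpha,\beta\notin\Gamma$; (n$_1$) from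 $\emptyset\mid\Gamma,\neg\alpha,\beta\Rightarrow\alpha$ and $\emptyset\mid\Gamma,\neg\alpha,\alpha\Rightarrow\beta$ infer $\mathcal H\mid\Gamma,\neg\alpha\Rightarrow\neg\beta$, if $\beta\notin\Gamma\cup\{\neg\alpha\}$ and $\alpha\notin\Gamma$; (n$_2$) from $\emptyset\mid\Gamma,\neg\alpha,\beta\Rightarrow\alpha$ and $\mathcal H\mid\Gamma,\neg\alpha\Rightarrow\beta$ infer $\mathcal H\mid\Gamma,\neg\alpha\Rightarrow\neg\beta$, if $\beta\notin\Gamma\cup\{\neg\alpha\}$ and $\alpha\in\Gamma$; (n$_3$) from $(\neg\beta,\mathcal H)\mid\Gamma,\neg\alpha\Rightarrow\alpha$ and $\emptyset\mid\Gamma,\neg\alpha,\alpha\Rightarrow\beta$ infer $\mathcal H\mid\Gamma,\neg\alpha\Rightarrow\neg\beta$, if $\neg\beta\notin\mathcal H$, $\beta\in\Gamma\cup\{\neg\alpha\}$ and $\alpha\notin\Gamma$; (n$_4$) from $(\neg\beta,\mathcal H)\mid\Gamma,\neg\alpha\Rightarrow\alpha$ and $\mathcal H\mid\Gamma,\neg\alpha\Rightarrow\beta$ infer $\mathcal H\mid\Gamma,\neg\alpha\Rightarrow\neg\beta$, if $\neg\beta\notin\mathcal H$, $\beta\in\Gamma\cup\{\neg\alpha\}$ and $\alpha\in\Gamma$; (nef) from $(\neg\beta,\mathcal H)\mid\Gamma,\neg\alpha\Rightarrow\alpha$ infer $\mathcal H\mid\Gamma,\neg\alpha\Rightarrow\neg\beta$,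 if $\neg\beta\notin\mathcal H$; (copc$_1$) from $\emptyset\mid\Gamma,\neg\alpha,\beta\Rightarrow\alpha$ infer $\mathcal H\mid\Gamma,\neg\alpha\Rightarrow\neg\beta$, if $\beta\notin\Gamma\cup\{\neg\alpha\}$; (copc$_2$) from $(\neg\beta,\mathcal H)\mid\Gamma,\neg\alpha\Rightarrow\alpha$ infer $\mathcal H\mid\Gamma,\neg\alpha\Rightarrow\neg\beta$, if $\neg\beta\notin\mathcal H$ and $\beta\in\Gamma\cup\{\neg\alpha\}$; (an) from $\emptyset\mid\Gamma,\alpha\Rightarrow\neg\alpha$ infer $\mathcal H\mid\Gamma\Rightarrow\neg\alpha$, if $\alpha\notin\Gamma$. In addition, the left rules ($\to$l), ($\wedge$l$_1$), ($\wedge$l$_2$), ($\vee$l) may only be applied when the goal $\varphi$ of the conclusion is a propositional variable, a negation or a disjunction. The positive history rules are (ax) through ($\vee$l). The four history systems are: $\mathbf{G3N}^{Hist}$ = positive history rules + (n$_1$)–(n$_4$); $\mathbf{G3NeF}^{Hist}$ = positive history rules + (n$_1$)–(n$_4$) + (nef); $\mathbf{G3CoPC}^{Hist}$ = positive history rules + (copc$_1$), (copc$_2$); $\mathbf{G3MPC}^{Hist}$ = positive history rules + (copc$_1$), (copc$_2$), (an). A derivation is a finite tree of rule instances whose leaves are instances of (ax) or ($\top$). *)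

theory Defs
  imports "HOL-Library.Multiset"
begin

datatype fm = Var nat | Top | And fm fm | Or fm fm | Imp fm fm | Neg fm

(* History sequent  H | Gamma => phi : history (finite set), antecedent (multiset), goal *)
type_synonym hseq = "fm set \<times> fm multiset \<times> fm"

datatype hsys = G3N | G3NeF | G3CoPC | G3MPC

definition has_n :: "hsys \<Rightarrow> bool" where
  "has_n s \<longleftrightarrow> s = G3N \<or> s = G3NeF"
definition has_nef :: "hsys \<Rightarrow> bool" where
  "has_nef s \<longleftrightarrow> s = G3NeF"
definition has_copc :: "hsys \<Rightarrow> bool" where
  "has_copc s \<longleftrightarrow> s = G3CoPC \<or> s = G3MPC"
definition has_an :: "hsys \<Rightarrow> bool" where
  "has_an s \<longleftrightarrow> s = G3MPC"

fun left_goal :: "fm \<Rightarrow> bool" where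
  "left_goal (Var p) = True"
| "left_goal (Neg a) = True"
| "left_goal (Or a b) = True"
| "left_goal _ = False"

(* prem s S' S : S' is a premise of some instance of a rule of system s whose conclusion is S.
   (ax) and (top) have no premises and hence contribute no steps. *)
inductive prem :: "hsys \<Rightarrow> hseq \<Rightarrow> hseq \<Rightarrow> bool" for s where
  impR1: "a \<notin># G \<Longrightarrow> prem s ({}, G + {#a#}, b) (H, G, Imp a b)"
| impR2: "a \<in># G \<Longrightarrow> prem s (H, G, b) (H, G, Imp a b)"
| impL1: "\<lbrakk>phi \<notin> H; b \<notin># G; left_goal phi\<rbrakk> \<Longrightarrow>
     prem s (insert phi H, G + {#Imp a b#}, a) (H, G + {#Imp a b#}, phi)"
| impL2: "\<lbrakk>phi \<notin> H; b \<notin># G; left_goal phi\<rbrakk> \<Longrightarrow>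
     prem s ({}, G + {#Imp a b#} + {#b#}, phi) (H, G + {#Imp a b#}, phi)"
| andR1: "prem s (H, G, a) (H, G, And a b)"
| andR2: "prem s (H, G, b) (H, G, And a b)"
| andL1: "\<lbrakk>a \<notin># G; left_goal phi\<rbrakk> \<Longrightarrow>
     prem s ({}, G + {#And a b#} + {#a#}, phi) (H, G + {#And a b#}, phi)"
| andL2: "\<lbrakk>b \<notin># G; left_goal phi\<rbrakk> \<Longrightarrow>
     prem s ({}, G + {#And a b#} + {#b#}, phi) (H, G + {#And a b#}, phi)"
| orR1: "prem s (H, G, a) (H, G, Or a b)"
| orR2: "prem s (H, G, b) (H, G, Or a b)"
| orL1: "\<lbrakk>a \<notin># G; b \<notin># G; left_goal phi\<rbrakk> \<Longrightarrow>
     prem s ({}, G + {#Or a b#} + {#a#}, phi) (H, G + {#Or a b#}, phi)"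
| orL2: "\<lbrakk>a \<notin># G; b \<notin># G; left_goal phi\<rbrakk> \<Longrightarrow>
     prem s ({}, G + {#Or a b#} + {#b#}, phi) (H, G + {#Or a b#}, phi)"
| n1a: "\<lbrakk>has_n s; b \<notin># G; b \<noteq> Neg a; a \<notin># G\<rbrakk> \<Longrightarrow>
     prem s ({}, G + {#Neg a#} + {#b#}, a) (H, G + {#Neg a#}, Neg b)"
| n1b: "\<lbrakk>has_n s; b \<notin># G; b \<noteq> Neg a; a \<notin># G\<rbrakk> \<Longrightarrow>
     prem s ({}, G + {#Neg a#} + {#a#}, b) (H, G + {#Neg a#}, Neg b)"
| n2a: "\<lbrakk>has_n s; b \<notin># G; b \<noteq> Neg a; a \<in># G\<rbrakk> \<Longrightarrow>
     prem s ({}, G + {#Neg a#} + {#b#}, a) (H, G + {#Neg a#}, Neg b)"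
| n2b: "\<lbrakk>has_n s; b \<notin># G; b \<noteq> Neg a; a \<in># G\<rbrakk> \<Longrightarrow>
     prem s (H, G + {#Neg a#}, b) (H, G + {#Neg a#}, Neg b)"
| n3a: "\<lbrakk>has_n s; Neg b \<notin> H; b \<in># G \<or> b = Neg a; a \<notin># G\<rbrakk> \<Longrightarrow>
     prem s (insert (Neg b) H, G + {#Neg a#}, a) (H, G + {#Neg a#}, Neg b)"
| n3b: "\<lbrakk>has_n s; Neg b \<notin> H; b \<in># G \<or> b = Neg a; a \<notin># G\<rbrakk> \<Longrightarrow>
     prem s ({}, G + {#Neg a#} + {#a#}, b) (H, G + {#Neg a#}, Neg b)"
| n4a: "\<lbrakk>has_n s; Neg b \<notin> H; b \<in># G \<or> b = Neg a; a \<in># G\<rbrakk> \<Longrightarrow>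
     prem s (insert (Neg b) H, G + {#Neg a#}, a) (H, G + {#Neg a#}, Neg b)"
| n4b: "\<lbrakk>has_n s; Neg b \<notin> H; b \<in># G \<or> b = Neg a; a \<in># G\<rbrakk> \<Longrightarrow>
     prem s (H, G + {#Neg a#}, b) (H, G + {#Neg a#}, Neg b)"
| nef: "\<lbrakk>has_nef s; Neg b \<notin> H\<rbrakk> \<Longrightarrow>
     prem s (insert (Neg b) H, G + {#Neg a#}, a) (H, G + {#Neg a#}, Neg b)"
| copc1: "\<lbrakk>has_copc s; b \<notin># G; b \<noteq> Neg a\<rbrakk> \<Longrightarrow>
     prem s ({}, G + {#Neg a#} + {#b#}, a) (H, G + {#Neg a#}, Neg b)"
| copc2: "\<lbrakk>has_copc s; Neg b \<notin> H; b \<in># G \<or> b = Neg a\<rbrakk> \<Longrightarrow>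
     prem s (insert (Neg b) H, G + {#Neg a#}, a) (H, G + {#Neg a#}, Neg b)"
| an: "\<lbrakk>has_an s; a \<notin># G\<rbrakk> \<Longrightarrow>
     prem s ({}, G + {#a#}, Neg a) (H, G, Neg a)"

end

theory Submission
  imports Defs
begin

text \<open>Fix the finite set U of subformulas of the initial sequent. Every rule premise has its
  antecedent and goal in U again, and compared with its conclusion either the set of antecedent
  formulas grows, or the antecedent is unchanged and the history grows inside U (history rules
  record the current goal, which lies in U), or antecedent and history are unchanged and the goal
  becomes a proper subformula. Since all three quantities are bounded in U, a lexicographic
  measure decreases along every backward search step.\<close>

fun subfms :: "fm \<Rightarrow> fm set" where
  "subfms (Var p) = {Var p}"
| "subfms Top = {Top}"
| "subfms (And a b) = insert (And a b) (subfms a \<union> subfms b)"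
| "subfms (Or a b) = insert (Or a b) (subfms a \<union> subfms b)"
| "subfms (Imp a b) = insert (Imp a b) (subfms a \<union> subfms b)"
| "subfms (Neg a) = insert (Neg a) (subfms a)"

lemma finite_subfms: "finite (subfms a)"
  by (induction a) auto

lemma subfms_refl: "a \<in> subfms a"
  by (cases a) auto

lemma subfms_trans: "b \<in> subfms a \<Longrightarrow> subfms b \<subseteq> subfms a"
  by (induction a) auto

definition subfm_closed :: "fm set \<Rightarrow> bool" where
  "subfm_closed U \<longleftrightarrow> (\<forall>a\<in>U. subfms a \<subseteq> U)"

lemma subfm_closed_Union_subfms: "subfm_closed (\<Union> (subfms ` A))"
  unfolding subfm_closed_def using subfms_trans by blast

lemma subfm_closedD:
  assumes "subfm_closed U"
  shows "And a b \<in> U \<Longrightarrow> a \<in> U \<and> b \<in> U" "Or a b \<in> U \<Longrightarrow> a \<in> U \<and> b \<in> U"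
    "Imp a b \<in> U \<Longrightarrow> a \<in> U \<and> b \<in> U" "Neg a \<in> U \<Longrightarrow> a \<in> U"
  using assms subfms_refl unfolding subfm_closed_def by fastforce+

lemma fm_neq_immediate_subfm:
  "And a b \<noteq> a" "And a b \<noteq> b" "Or a b \<noteq> a" "Or a b \<noteq> b" "Imp a b \<noteq> b" "Neg a \<noteq> a"
  by (auto dest: arg_cong[where f = size])

lemma eq_insert_self_iff: "A = insert a A \<longleftrightarrow> a \<in> A"
  by blast

fun hseq_over :: "fm set \<Rightarrow> hseq \<Rightarrow> bool" where
  "hseq_over U (H, G, \<phi>) \<longleftrightarrow> set_mset G \<subseteq> U \<and> \<phi> \<in> U"

fun search_progress :: "fm set \<Rightarrow> hseq \<Rightarrow> hseq \<Rightarrow> bool" where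
  "search_progress U (H', G', \<phi>') (H, G, \<phi>) \<longleftrightarrow>
     set_mset G \<subset> set_mset G' \<or>
     (G' = G \<and> (H \<inter> U \<subset> H' \<inter> U \<or> (H' = H \<and> size \<phi>' < size \<phi>)))"

lemma prem_hseq_over:
  assumes "prem s S' S" "subfm_closed U" "hseq_over U S"
  shows "hseq_over U S'"
  using assms by induction (auto dest: subfm_closedD)

lemma prem_search_progress:
  assumes "prem s S' S" "subfm_closed U" "hseq_over U S"
  shows "search_progress U S' S"
  using assms
  by induction (auto simp: eq_insert_self_iff fm_neq_immediate_subfm
      fm_neq_immediate_subfm[symmetric] dest: subfm_closedD)

definition search_measure :: "fm set \<Rightarrow> (hseq \<times> hseq) set" where
  "search_measure U = measures
     [\<lambda>(H, G, \<phi>). card U - card (set_mset G),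
      \<lambda>(H, G, \<phi>). card U - card (H \<inter> U),
      \<lambda>(H, G, \<phi>). size \<phi>]"

lemma card_diff_less:
  assumes "finite U" "A \<subset> B" "B \<subseteq> U"
  shows "card U - card B < card U - card A"
proof -
  have "card A < card B" using assms by (meson psubset_card_mono rev_finite_subset)
  moreover have "card B \<le> card U" using assms card_mono by blast
  ultimately show ?thesis by linarith
qed

lemma search_progress_measure:
  assumes "finite U" "search_progress U S' S" "hseq_over U S'"
  shows "(S', S) \<in> search_measure U"
proof -
  obtain H G \<phi> H' G' \<phi>' where "S = (H, G, \<phi>)" "S' = (H', G', \<phi>')"
    using prod_cases3 by metis
  then show ?thesis
    using assms card_diff_less[OF \<open>finite U\<close>]
    by (auto simp: search_measure_def)
qed

theorem theorem5p5:
  fixes s :: hsys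
  shows "\<not> (\<exists>S :: nat \<Rightarrow> hseq. (\<forall>i. finite (fst (S i))) \<and> (\<forall>i. prem s (S (Suc i)) (S i)))"
proof
  assume "\<exists>S :: nat \<Rightarrow> hseq. (\<forall>i. finite (fst (S i))) \<and> (\<forall>i. prem s (S (Suc i)) (S i))"
  then obtain S :: "nat \<Rightarrow> hseq" where chain: "\<And>i. prem s (S (Suc i)) (S i)" by blast
  obtain H G \<phi> where S0: "S 0 = (H, G, \<phi>)" using prod_cases3 by metis
  define U where "U = \<Union> (subfms ` insert \<phi> (set_mset G))"
  have closed: "subfm_closed U" unfolding U_def by (rule subfm_closed_Union_subfms)
  have "finite U" unfolding U_def by (simp add: finite_subfms)
  have over: "hseq_over U (S i)" for i
  proof (induction i)
    case 0
    show ?case unfolding S0 U_def using subfms_refl by auto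
  next
    case (Suc i)
    then show ?case using prem_hseq_over[OF chain closed] by blast
  qed
  have "(S (Suc i), S i) \<in> search_measure U" for i
    using search_progress_measure[OF \<open>finite U\<close> prem_search_progress[OF chain closed over] over] .
  moreover have "wf (search_measure U)" by (simp add: search_measure_def)
  ultimately show False using wf_iff_no_infinite_down_chain by blast
qed

end
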